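(* Let $\mathcal{G}$ be an undirected graph on $N$ vertices with symmetric weighted adjacency matrix $\mathbf{A}$ having nonnegative entries ($a_{ij}>0$ on edges, $a_{ij}=0$ otherwise, $a_{ii}=0$), weighted degree matrix $\mathbf{D}=\mathrm{diag}(d_{ii})$ with $d_{ii}=\sum_j a_{ij}$, and deformed Laplacian $\mathbf{L}_{\mathrm{DF}}(r)=(\mathbf{D}-\mathbf{I})r^2-\mathbf{A}r+\mathbf{I}$. Then: (a) $\mathbf{L}_{\mathrm{DF}}(r)$ is a regular matrix polynomial and $0$ is never an eigenvalue of it; (b) $1$ is always an eigenvalue of $\mathbf{L}_{\mathrm{DF}}(r)$, with geometric multiplicity equal to the number of connected components of $\mathcal{G}$; (c) the geometric multiplicity of $\infty$ as an eigenvalue of $\mathbf{L}_{\mathrm{DF}}(r)$ equals the number of vertices of (weighted) degree $d_{ii}=1$; in particular $\infty$ is an eigenvalue iff $\mathcal{G}$ has at least one vertex of degree $1$; (d) $-1$ is an eigenvalue of $\mathbf{L}_{\mathrm{DF}}(r)$ if and only if $\mathcal{G}$ has at least one bipartite connected component, and in that case its geometric multiplicity equals the number of bipartite connected components of $\mathcal{G}$.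
   Context: For a square matrix polynomial $\mathbf{P}(r)=\sum_{j=0}^k \mathbf{A}_j r^j$ with $\mathbf{A}_k\neq 0$: it is regular if $\det\mathbf{P}(r)$ is not identically zero; a finite eigenvalue is $r_0\in\mathbb{C}$ with $\det\mathbf{P}(r_0)=0$, with geometric multiplicity $\dim\ker\mathbf{P}(r_0)$; $\infty$ is an eigenvalue if $0$ is an eigenvalue of the reversal polynomial $r^k\mathbf{P}(1/r)$, and its geometric multiplicity is $\dim\ker\mathbf{A}_k$ (for $\mathbf{L}_{\mathrm{DF}}$, $\dim\ker(\mathbf{D}-\mathbf{I})$). A connected component is bipartite if its vertex set splits into two disjoint sets with every edge joining the two sets (isolated vertices count as bipartite components). *)

theory Defs
  imports "HOL-Analysis.Analysis"
begin

text \<open>A square matrix polynomial of grade k is given by its coefficient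
  function C (coefficients C 0, ..., C k); its value at r is the sum of r^j C j.\<close>

definition mpeval :: "(nat \<Rightarrow> complex^'n^'n) \<Rightarrow> nat \<Rightarrow> complex \<Rightarrow> complex^'n^'n" where
  "mpeval C k r = (\<chi> a b. \<Sum>j\<le>k. r ^ j * (C j $ a $ b))"

definition mp_regular :: "(nat \<Rightarrow> complex^'n^'n) \<Rightarrow> nat \<Rightarrow> bool" where
  "mp_regular C k \<longleftrightarrow> (\<exists>r. det (mpeval C k r) \<noteq> 0)"

definition mp_eigenvalue :: "(nat \<Rightarrow> complex^'n^'n) \<Rightarrow> nat \<Rightarrow> complex \<Rightarrow> bool" where
  "mp_eigenvalue C k r0 \<longleftrightarrow> det (mpeval C k r0) = 0"

definition mp_geom_mult :: "(nat \<Rightarrow> complex^'n^'n) \<Rightarrow> nat \<Rightarrow> complex \<Rightarrow> nat" where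
  "mp_geom_mult C k r0 = vec.dim {x. mpeval C k r0 *v x = 0}"

text \<open>Reversal polynomial r^k P(1/r).\<close>
definition mp_reversal :: "(nat \<Rightarrow> complex^'n^'n) \<Rightarrow> nat \<Rightarrow> nat \<Rightarrow> complex^'n^'n" where
  "mp_reversal C k j = (if j \<le> k then C (k - j) else 0)"

definition mp_inf_eigenvalue :: "(nat \<Rightarrow> complex^'n^'n) \<Rightarrow> nat \<Rightarrow> bool" where
  "mp_inf_eigenvalue C k \<longleftrightarrow> mp_eigenvalue (mp_reversal C k) k 0"

definition mp_geom_mult_inf :: "(nat \<Rightarrow> complex^'n^'n) \<Rightarrow> nat \<Rightarrow> nat" where
  "mp_geom_mult_inf C k = mp_geom_mult (mp_reversal C k) k 0"

definition weighted_adjacency :: "real^'n^'n \<Rightarrow> bool" where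
  "weighted_adjacency A \<longleftrightarrow>
     (\<forall>i j. A $ i $ j = A $ j $ i) \<and> (\<forall>i j. 0 \<le> A $ i $ j) \<and> (\<forall>i. A $ i $ i = 0)"

definition adj :: "real^'n^'n \<Rightarrow> 'n \<Rightarrow> 'n \<Rightarrow> bool" where
  "adj A i j \<longleftrightarrow> A $ i $ j > 0"

definition wdeg :: "real^'n^'n \<Rightarrow> 'n \<Rightarrow> real" where
  "wdeg A i = (\<Sum>j\<in>UNIV. A $ i $ j)"

definition degree_matrix :: "real^'n^'n \<Rightarrow> real^'n^'n" where
  "degree_matrix A = (\<chi> i j. if i = j then wdeg A i else 0)"

definition components :: "real^'n^'n \<Rightarrow> 'n set set" where
  "components A = UNIV // {(i, j). (adj A)\<^sup>*\<^sup>* i j}"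

definition bipartite_on :: "real^'n^'n \<Rightarrow> 'n set \<Rightarrow> bool" where
  "bipartite_on A C \<longleftrightarrow> (\<exists>S T. S \<inter> T = {} \<and> S \<union> T = C \<and>
      (\<forall>i\<in>C. \<forall>j\<in>C. adj A i j \<longrightarrow> (i \<in> S \<and> j \<in> T) \<or> (i \<in> T \<and> j \<in> S)))"

definition bipartite_components :: "real^'n^'n \<Rightarrow> 'n set set" where
  "bipartite_components A = {C \<in> components A. bipartite_on A C}"

definition cmat :: "real^'n^'n \<Rightarrow> complex^'n^'n" where
  "cmat M = (\<chi> i j. complex_of_real (M $ i $ j))"

definition LDF :: "real^'n^'n \<Rightarrow> nat \<Rightarrow> complex^'n^'n" where
  "LDF A j = (if j = 0 then mat 1
              else if j = 1 then - cmat A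
              else if j = 2 then cmat (degree_matrix A - mat 1)
              else 0)"

end

theory Submission imports Defs begin

text \<open>At r = 0 the deformed Laplacian is the identity, and whenever r^2 = 1 the quadratic
  term cancels the identity, leaving D - r A: the Laplacian at r = 1 and the signless Laplacian
  at r = -1. For s = 1 or s = -1 the identity x' (D - s A) x = 1/2 sum_ij a_ij (x_i - s x_j)^2,
  applied to real and imaginary parts, shows that the kernel of D - s A consists of the vectors
  with x_i = s x_j along every edge. Such a vector is, on each connected component, a multiple of
  a sign pattern (a vector of entries 1 and -1) with the same property, and vanishes on components
  admitting no such pattern; sign patterns exist on every component for s = 1 and exactly on the
  bipartite ones for s = -1. The leading coefficient D - I is diagonal, so its kernel is spanned
  by the unit vectors of the vertices of degree 1. Finally, an eigenvalue is precisely a point of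
  nonzero geometric multiplicity.\<close>

section \<open>Kernels and vectors with disjoint supports\<close>

lemma det_eq_0_iff_nontrivial_kernel:
  fixes M :: "'a::field^'n^'n"
  shows "det M = 0 \<longleftrightarrow> (\<exists>x. x \<noteq> 0 \<and> M *v x = 0)"
  by (metis invertible_det_nz invertible_left_inverse matrix_left_invertible_ker)

lemma mp_eigenvalue_iff_geom_mult_nonzero:
  "mp_eigenvalue C k r \<longleftrightarrow> mp_geom_mult C k r \<noteq> 0"
  unfolding mp_eigenvalue_def mp_geom_mult_def det_eq_0_iff_nontrivial_kernel vec.dim_eq_0
  by blast

lemma mp_inf_eigenvalue_iff_geom_mult_inf_nonzero:
  "mp_inf_eigenvalue C k \<longleftrightarrow> mp_geom_mult_inf C k \<noteq> 0"
  unfolding mp_inf_eigenvalue_def mp_geom_mult_inf_def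
  by (rule mp_eigenvalue_iff_geom_mult_nonzero)

lemma sum_disjoint_supports_nth:
  fixes v :: "'n set \<Rightarrow> 'a::field^'n"
  assumes fin: "finite B" and support: "\<And>C k. C \<in> B \<Longrightarrow> k \<notin> C \<Longrightarrow> v C $ k = 0"
    and disjoint: "pairwise disjnt B" and D: "D \<in> B" and i: "i \<in> D"
  shows "(\<Sum>C\<in>B. c C *s v C) $ i = c D * v D $ i"
proof -
  have "v C $ i = 0" if "C \<in> B - {D}" for C
    using pairwiseD[OF disjoint D] that i support by (auto simp: disjnt_iff)
  then show ?thesis
    using fin D by (simp add: sum.remove)
qed

lemma inj_on_disjoint_supports:
  fixes v :: "'n set \<Rightarrow> 'a::field^'n"
  assumes support: "\<And>C k. C \<in> B \<Longrightarrow> k \<notin> C \<Longrightarrow> v C $ k = 0"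
    and disjoint: "pairwise disjnt B" and nonzero: "\<And>C. C \<in> B \<Longrightarrow> \<exists>k\<in>C. v C $ k \<noteq> 0"
  shows "inj_on v B"
proof (rule inj_onI)
  fix C D assume C: "C \<in> B" and D: "D \<in> B" and eq: "v C = v D"
  obtain k where "k \<in> C" and "v D $ k \<noteq> 0"
    using nonzero[OF C] eq by auto
  then have "\<not> disjnt C D"
    using support[OF D] by (auto simp: disjnt_iff)
  then show "C = D"
    using pairwiseD[OF disjoint C D] by blast
qed

lemma independent_disjoint_supports:
  fixes v :: "'n set \<Rightarrow> 'a::field^'n"
  assumes fin: "finite B" and support: "\<And>C k. C \<in> B \<Longrightarrow> k \<notin> C \<Longrightarrow> v C $ k = 0"
    and disjoint: "pairwise disjnt B" and nonzero: "\<And>C. C \<in> B \<Longrightarrow> \<exists>k\<in>C. v C $ k \<noteq> 0"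
  shows "vec.independent (v ` B)"
proof (rule vec.independent_if_scalars_zero)
  show "finite (v ` B)"
    using fin by simp
next
  fix f y assume zero: "(\<Sum>y\<in>v ` B. f y *s y) = 0" and "y \<in> v ` B"
  then obtain C where C: "C \<in> B" and y: "y = v C"
    by blast
  obtain k where k: "k \<in> C" and nz: "v C $ k \<noteq> 0"
    using nonzero[OF C] by blast
  have inj: "inj_on v B"
    by (rule inj_on_disjoint_supports[where v = v, OF support disjoint nonzero])
  have "(\<Sum>D\<in>B. f (v D) *s v D) = 0"
    using zero by (subst (asm) sum.reindex[OF inj]) (simp add: o_def)
  then have "f (v C) * v C $ k = 0"
    using sum_disjoint_supports_nth[where v = v and c = "\<lambda>D. f (v D)", OF fin support disjoint C k]
    by simp
  then show "f y = 0"
    using nz y by simp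
qed

section \<open>Values of the deformed Laplacian\<close>

lemma mpeval_LDF:
  "mpeval (LDF A) 2 r $ i $ j = (if i = j then 1 else 0) - r * of_real (A$i$j)
     + r\<^sup>2 * (of_real (degree_matrix A $ i $ j) - (if i = j then 1 else 0))"
  unfolding mpeval_def LDF_def cmat_def
  by (simp add: numeral_2_eq_2 atMost_Suc mat_def)

lemma mpeval_LDF_0: "mpeval (LDF A) 2 0 = mat 1"
  by (simp add: vec_eq_iff mpeval_LDF mat_def)

lemma mpeval_LDF_sign:
  assumes "s\<^sup>2 = 1"
  shows "mpeval (LDF A) 2 (of_real s) = cmat (degree_matrix A - s *\<^sub>R A)"
proof -
  have "(complex_of_real s)\<^sup>2 = 1"
    by (metis assms of_real_eq_1_iff of_real_power)
  then show ?thesis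
    by (simp add: vec_eq_iff mpeval_LDF cmat_def mat_def degree_matrix_def)
qed

lemma mpeval_reversal_LDF_0:
  "mpeval (mp_reversal (LDF A) 2) 2 0 = cmat (degree_matrix A - mat 1)"
  unfolding mpeval_def mp_reversal_def LDF_def
  by (simp add: numeral_2_eq_2 atMost_Suc vec_eq_iff)

section \<open>The kernel of D - s A\<close>

lemma weighted_adjacency_sym: "weighted_adjacency A \<Longrightarrow> A$i$j = A$j$i"
  and weighted_adjacency_nonneg: "weighted_adjacency A \<Longrightarrow> 0 \<le> A$i$j"
  by (auto simp: weighted_adjacency_def)

lemma adj_sym: "weighted_adjacency A \<Longrightarrow> adj A i j \<Longrightarrow> adj A j i"
  by (simp add: adj_def weighted_adjacency_sym)

lemma not_adj_imp_zero: "weighted_adjacency A \<Longrightarrow> \<not> adj A i j \<Longrightarrow> A$i$j = 0"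
  using weighted_adjacency_nonneg[of A i j] by (simp add: adj_def)

lemma sum_sq_signed_differences:
  fixes A :: "real^'n^'n" and y :: "'n \<Rightarrow> real"
  assumes sym: "\<And>i j. A$i$j = A$j$i" and s: "s\<^sup>2 = 1"
  shows "(\<Sum>i\<in>UNIV. \<Sum>j\<in>UNIV. A$i$j * (y i - s * y j)\<^sup>2)
       = 2 * (\<Sum>i\<in>UNIV. y i * (\<Sum>j\<in>UNIV. A$i$j * (y i - s * y j)))"
proof -
  have split: "A$i$j * (y i - s * y j)\<^sup>2 = A$i$j * (y i - s * y j) * y i + A$i$j * (y j - s * y i) * y j"
    for i j using s by (simp add: power2_eq_square algebra_simps)
  have swap: "(\<Sum>i\<in>UNIV. \<Sum>j\<in>UNIV. A$i$j * (y j - s * y i) * y j)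
            = (\<Sum>i\<in>UNIV. \<Sum>j\<in>UNIV. A$i$j * (y i - s * y j) * y i)"
    by (subst sum.swap) (simp add: sym)
  show ?thesis
    unfolding split sum.distrib swap
    by (simp add: sum_distrib_left sum_distrib_right mult_ac)
qed

lemma harmonic_imp_edge_relation:
  fixes A :: "real^'n^'n" and y :: "'n \<Rightarrow> real"
  assumes wa: "weighted_adjacency A" and s: "s\<^sup>2 = 1"
    and harmonic: "\<And>i. (\<Sum>j\<in>UNIV. A$i$j * (y i - s * y j)) = 0"
    and ij: "adj A i j"
  shows "y i = s * y j"
proof -
  have nonneg: "0 \<le> A$a$b * (y a - s * y b)\<^sup>2" for a b
    using weighted_adjacency_nonneg[OF wa] by simp
  have "(\<Sum>a\<in>UNIV. \<Sum>b\<in>UNIV. A$a$b * (y a - s * y b)\<^sup>2) = 0"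
    using sum_sq_signed_differences[OF weighted_adjacency_sym[OF wa] s] harmonic by simp
  then have "A$i$j * (y i - s * y j)\<^sup>2 = 0"
    using nonneg by (simp add: sum_nonneg sum_nonneg_eq_0_iff)
  then show ?thesis
    using ij by (simp add: adj_def)
qed

definition sign_consistent :: "real^'n^'n \<Rightarrow> real \<Rightarrow> (complex^'n) set" where
  "sign_consistent A s = {x. \<forall>i j. adj A i j \<longrightarrow> x$i = of_real s * x$j}"

lemma signed_laplacian_mult:
  "(cmat (degree_matrix A - s *\<^sub>R A) *v x) $ i
     = (\<Sum>j\<in>UNIV. of_real (A$i$j) * (x$i - of_real s * x$j))"
proof -
  have "(cmat (degree_matrix A - s *\<^sub>R A) *v x) $ i
      = (\<Sum>j\<in>UNIV. (if i = j then of_real (wdeg A i) * x$j else 0) - of_real (A$i$j) * (of_real s * x$j))"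
    unfolding cmat_def degree_matrix_def matrix_vector_mult_def vec_lambda_beta
    by (intro sum.cong) (auto simp: algebra_simps)
  also have "\<dots> = (\<Sum>j\<in>UNIV. of_real (A$i$j) * x$i) - (\<Sum>j\<in>UNIV. of_real (A$i$j) * (of_real s * x$j))"
    by (simp add: sum_subtractf wdeg_def sum_distrib_right)
  finally show ?thesis
    by (simp add: sum_subtractf right_diff_distrib)
qed

lemma kernel_signed_laplacian:
  fixes A :: "real^'n^'n"
  assumes wa: "weighted_adjacency A" and s: "s\<^sup>2 = 1"
  shows "{x. cmat (degree_matrix A - s *\<^sub>R A) *v x = 0} = sign_consistent A s"
proof (intro set_eqI iffI)
  fix x assume "x \<in> {x. cmat (degree_matrix A - s *\<^sub>R A) *v x = 0}"
  then have harmonic: "(\<Sum>j\<in>UNIV. of_real (A$i$j) * (x$i - of_real s * x$j)) = 0" for i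
    by (metis (mono_tags) mem_Collect_eq signed_laplacian_mult zero_index)
  have "Re (x$i) = s * Re (x$j)" and "Im (x$i) = s * Im (x$j)" if "adj A i j" for i j
  proof -
    show "Re (x$i) = s * Re (x$j)"
      using harmonic_imp_edge_relation[OF wa s _ that, of "\<lambda>i. Re (x$i)"]
        arg_cong[OF harmonic, of Re] by (simp add: Re_sum)
    show "Im (x$i) = s * Im (x$j)"
      using harmonic_imp_edge_relation[OF wa s _ that, of "\<lambda>i. Im (x$i)"]
        arg_cong[OF harmonic, of Im] by (simp add: Im_sum)
  qed
  then show "x \<in> sign_consistent A s"
    by (simp add: sign_consistent_def complex_eq_iff)
next
  fix x assume "x \<in> sign_consistent A s"
  then have zero: "of_real (A$i$j) * (x$i - of_real s * x$j) = 0" for i j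
    using not_adj_imp_zero[OF wa] by (cases "adj A i j") (auto simp: sign_consistent_def)
  show "x \<in> {x. cmat (degree_matrix A - s *\<^sub>R A) *v x = 0}"
    unfolding mem_Collect_eq vec_eq_iff signed_laplacian_mult zero by simp
qed

section \<open>Connected components and sign patterns\<close>

lemma equiv_reachable:
  assumes "weighted_adjacency A"
  shows "equiv UNIV {(i, j). (adj A)\<^sup>*\<^sup>* i j}"
proof -
  have "symp (adj A)"
    using adj_sym[OF assms] by (blast intro: sympI)
  then have "symp (adj A)\<^sup>*\<^sup>*"
    by (rule symp_rtranclp)
  then show ?thesis
    unfolding equiv_def refl_on_def sym_def trans_def
    by (auto dest: sympD intro: rtranclp_trans)
qed

lemma component_adj_closed:
  "weighted_adjacency A \<Longrightarrow> C \<in> components A \<Longrightarrow> i \<in> C \<Longrightarrow> adj A i j \<Longrightarrow> j \<in> C"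
  unfolding components_def by (erule in_quotient_imp_closed[OF equiv_reachable]) auto

lemma pairwise_disjnt_components: "weighted_adjacency A \<Longrightarrow> pairwise disjnt (components A)"
  unfolding components_def pairwise_def disjnt_def using quotient_disj[OF equiv_reachable] by blast

lemma component_nonempty: "weighted_adjacency A \<Longrightarrow> C \<in> components A \<Longrightarrow> C \<noteq> {}"
  unfolding components_def by (rule in_quotient_imp_non_empty[OF equiv_reachable])

lemma component_exists: "\<exists>C\<in>components A. i \<in> C"
  unfolding components_def by (intro bexI[OF _ quotientI]) auto

lemma finite_components: "finite (components (A :: real^'n^'n))"
  unfolding components_def by (rule finite_quotient) auto

lemma edge_invariant_constant_on_component:
  assumes wa: "weighted_adjacency A" and C: "C \<in> components A"
    and inv: "\<And>a b. a \<in> C \<Longrightarrow> adj A a b \<Longrightarrow> f a = f b"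
    and i: "i \<in> C" and j: "j \<in> C"
  shows "f i = f j"
proof -
  have reach: "(adj A)\<^sup>*\<^sup>* i j"
    using in_quotient_imp_in_rel[OF equiv_reachable[OF wa], of C i j] C i j
    by (simp add: components_def)
  have "k \<in> C \<and> f i = f k" if "(adj A)\<^sup>*\<^sup>* i k" for k
    using that
  proof (induction k rule: rtranclp_induct)
    case (step k l)
    then show ?case
      using component_adj_closed[OF wa C _ step.hyps(2)] inv[OF _ step.hyps(2)] by simp
  qed (use i in simp)
  with reach show ?thesis
    by blast
qed

definition sign_balanced :: "real^'n^'n \<Rightarrow> real \<Rightarrow> 'n set \<Rightarrow> bool" where
  "sign_balanced A s C \<longleftrightarrow> (\<exists>\<sigma>. (\<forall>i\<in>C. \<sigma> i = 1 \<or> \<sigma> i = -1) \<and>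
      (\<forall>i\<in>C. \<forall>j\<in>C. adj A i j \<longrightarrow> \<sigma> i = s * \<sigma> j))"

lemma sign_balanced_1: "sign_balanced A 1 C"
  unfolding sign_balanced_def by (rule exI[of _ "\<lambda>_. 1"]) simp

lemma sign_balanced_neg1_iff_bipartite:
  fixes A :: "real^'n^'n"
  shows "sign_balanced A (-1) C \<longleftrightarrow> bipartite_on A C"
proof
  assume "sign_balanced A (-1) C"
  then obtain \<sigma> :: "'n \<Rightarrow> real" where pm: "\<forall>i\<in>C. \<sigma> i = 1 \<or> \<sigma> i = -1"
    and alt: "\<forall>i\<in>C. \<forall>j\<in>C. adj A i j \<longrightarrow> \<sigma> i = -1 * \<sigma> j"
    unfolding sign_balanced_def by blast
  define S where "S = {i\<in>C. \<sigma> i = 1}"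
  define T where "T = {i\<in>C. \<sigma> i = -1}"
  have "S \<inter> T = {}" and "S \<union> T = C"
    using pm by (auto simp: S_def T_def)
  moreover have "(i \<in> S \<and> j \<in> T) \<or> (i \<in> T \<and> j \<in> S)" if "i \<in> C" "j \<in> C" "adj A i j" for i j
  proof -
    have "\<sigma> i = - \<sigma> j"
      using alt that by simp
    moreover have "\<sigma> i = 1 \<or> \<sigma> i = -1"
      using pm that(1) by blast
    ultimately show ?thesis
      using that(1,2) unfolding S_def T_def by auto
  qed
  ultimately show "bipartite_on A C"
    unfolding bipartite_on_def by blast
next
  assume "bipartite_on A C"
  then obtain S T where disjoint: "S \<inter> T = {}"
    and cross: "\<forall>i\<in>C. \<forall>j\<in>C. adj A i j \<longrightarrow> (i \<in> S \<and> j \<in> T) \<or> (i \<in> T \<and> j \<in> S)"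
    unfolding bipartite_on_def by blast
  define \<sigma> :: "'n \<Rightarrow> real" where "\<sigma> i = (if i \<in> S then 1 else -1)" for i
  have "\<sigma> i = - \<sigma> j" if "i \<in> C" "j \<in> C" "adj A i j" for i j
  proof -
    have "(i \<in> S \<and> j \<notin> S) \<or> (i \<notin> S \<and> j \<in> S)"
      using cross disjoint that by blast
    then show ?thesis
      unfolding \<sigma>_def by auto
  qed
  then show "sign_balanced A (-1) C"
    unfolding sign_balanced_def by (intro exI[of _ \<sigma>]) (simp add: \<sigma>_def)
qed

lemma sign_consistent_vanishes_off_balanced:
  fixes A :: "real^'n^'n"
  assumes wa: "weighted_adjacency A" and s: "s\<^sup>2 = 1" and x: "x \<in> sign_consistent A s"
    and C: "C \<in> components A" and unbalanced: "\<not> sign_balanced A s C" and i: "i \<in> C"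
  shows "x$i = 0"
proof (rule ccontr)
  assume nonzero: "x$i \<noteq> 0"
  have "(complex_of_real s)\<^sup>2 = 1"
    by (metis s of_real_eq_1_iff of_real_power)
  then have "(x$a)\<^sup>2 = (x$b)\<^sup>2" if "adj A a b" for a b
    using x that by (simp add: sign_consistent_def power_mult_distrib)
  then have sq: "(x$j)\<^sup>2 = (x$i)\<^sup>2" if "j \<in> C" for j
    using edge_invariant_constant_on_component[OF wa C _ that i, of "\<lambda>k. (x$k)\<^sup>2"] by blast
  define \<sigma> :: "'n \<Rightarrow> real" where "\<sigma> j = (if x$j = x$i then 1 else -1)" for j
  have x_eq: "x$j = of_real (\<sigma> j) * x$i" if "j \<in> C" for j
    using sq[OF that] by (auto simp: \<sigma>_def power2_eq_iff)
  have "\<sigma> a = s * \<sigma> b" if "a \<in> C" "b \<in> C" "adj A a b" for a b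
  proof -
    have "of_real (\<sigma> a) * x$i = x$a"
      using x_eq[OF that(1)] by simp
    also have "\<dots> = of_real s * x$b"
      using x that(3) by (simp add: sign_consistent_def)
    also have "\<dots> = of_real (s * \<sigma> b) * x$i"
      using x_eq[OF that(2)] by simp
    finally show ?thesis
      using nonzero by (metis mult_right_cancel of_real_eq_iff)
  qed
  then have "sign_balanced A s C"
    unfolding sign_balanced_def by (intro exI[of _ \<sigma>]) (simp add: \<sigma>_def)
  with unbalanced show False ..
qed

lemma sign_consistent_on_balanced:
  assumes wa: "weighted_adjacency A" and s: "s\<^sup>2 = 1" and x: "x \<in> sign_consistent A s"
    and C: "C \<in> components A" and pm: "\<forall>k\<in>C. \<sigma> k = 1 \<or> \<sigma> k = -1"
    and balanced: "\<forall>a\<in>C. \<forall>b\<in>C. adj A a b \<longrightarrow> \<sigma> a = s * \<sigma> b"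
    and i: "i \<in> C" and j: "j \<in> C"
  shows "x$i = of_real (\<sigma> i * \<sigma> j) * x$j"
proof -
  have "of_real (\<sigma> a) * x$a = of_real (\<sigma> b) * x$b" if a: "a \<in> C" and ab: "adj A a b" for a b
  proof -
    have "\<sigma> a = s * \<sigma> b"
      using balanced a ab component_adj_closed[OF wa C a ab] by blast
    moreover have "x$a = of_real s * x$b"
      using x ab by (simp add: sign_consistent_def)
    ultimately have "of_real (\<sigma> a) * x$a = of_real (s * s) * (of_real (\<sigma> b) * x$b)"
      by (simp add: mult_ac)
    also have "s * s = 1"
      using s by (simp add: power2_eq_square)
    finally show ?thesis
      by simp
  qed
  then have weighted_equal: "of_real (\<sigma> i) * x$i = of_real (\<sigma> j) * x$j"
    by (rule edge_invariant_constant_on_component[OF wa C _ i j])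
  have "x$i = of_real (\<sigma> i * \<sigma> i) * x$i"
    using pm i by auto
  also have "\<dots> = of_real (\<sigma> i) * (of_real (\<sigma> j) * x$j)"
    by (simp add: mult.assoc weighted_equal)
  finally show ?thesis
    by (simp add: mult.assoc)
qed

definition sign_vector :: "'n set \<Rightarrow> ('n \<Rightarrow> real) \<Rightarrow> complex^'n" where
  "sign_vector C \<sigma> = (\<chi> k. if k \<in> C then of_real (\<sigma> k) else 0)"

lemma sign_vector_in_sign_consistent:
  assumes wa: "weighted_adjacency A" and C: "C \<in> components A"
    and balanced: "\<forall>a\<in>C. \<forall>b\<in>C. adj A a b \<longrightarrow> \<sigma> a = s * \<sigma> b"
  shows "sign_vector C \<sigma> \<in> sign_consistent A s"
  unfolding sign_consistent_def
proof (intro CollectI allI impI)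
  fix a b assume ab: "adj A a b"
  have "a \<in> C \<longleftrightarrow> b \<in> C"
    using component_adj_closed[OF wa C] adj_sym[OF wa ab] ab by blast
  moreover have "\<sigma> a = s * \<sigma> b" if "a \<in> C" "b \<in> C"
    using balanced ab that by blast
  ultimately show "sign_vector C \<sigma> $ a = of_real s * sign_vector C \<sigma> $ b"
    by (auto simp: sign_vector_def)
qed

definition balanced_components :: "real^'n^'n \<Rightarrow> real \<Rightarrow> 'n set set" where
  "balanced_components A s = {C \<in> components A. sign_balanced A s C}"

lemma balanced_components_subset: "balanced_components A s \<subseteq> components A"
  by (auto simp: balanced_components_def)

lemma finite_balanced_components: "finite (balanced_components (A :: real^'n^'n) s)"
  using finite_subset[OF balanced_components_subset finite_components] .

lemma pairwise_disjnt_balanced_components: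
  "weighted_adjacency A \<Longrightarrow> pairwise disjnt (balanced_components A s)"
  using pairwise_subset[OF pairwise_disjnt_components balanced_components_subset] .

lemma sign_consistent_subset_span:
  fixes A :: "real^'n^'n"
  assumes wa: "weighted_adjacency A" and s: "s\<^sup>2 = 1"
    and pm: "\<And>C i. C \<in> balanced_components A s \<Longrightarrow> i \<in> C \<Longrightarrow> \<sigma> C i = 1 \<or> \<sigma> C i = -1"
    and balanced: "\<And>C. C \<in> balanced_components A s \<Longrightarrow>
                     \<forall>a\<in>C. \<forall>b\<in>C. adj A a b \<longrightarrow> \<sigma> C a = s * \<sigma> C b"
  shows "sign_consistent A s \<subseteq> vec.span ((\<lambda>C. sign_vector C (\<sigma> C)) ` balanced_components A s)"
proof
  fix x assume x: "x \<in> sign_consistent A s"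
  let ?B = "balanced_components A s"
  let ?v = "\<lambda>C. sign_vector C (\<sigma> C)"
  let ?r = "\<lambda>C. SOME i. i \<in> C"
  define c where "c C = x $ ?r C * of_real (\<sigma> C (?r C))" for C
  have B: "?B \<subseteq> components A"
    by (rule balanced_components_subset)
  note fin = finite_balanced_components[of A s]
  note disjoint = pairwise_disjnt_balanced_components[OF wa, of s]
  have support: "?v C $ k = 0" if "k \<notin> C" for C k
    using that by (simp add: sign_vector_def)
  have "x $ i = (\<Sum>C\<in>?B. c C *s ?v C) $ i" for i
  proof -
    obtain D where D: "D \<in> components A" "i \<in> D"
      using component_exists by blast
    show ?thesis
    proof (cases "D \<in> ?B")
      case True
      have r: "?r D \<in> D"
        using D(2) by (rule someI)
      have "x $ i = of_real (\<sigma> D i * \<sigma> D (?r D)) * x $ ?r D"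
        by (rule sign_consistent_on_balanced[OF wa s x D(1) _ balanced[OF True] D(2) r])
          (use pm[OF True] in blast)
      also have "\<dots> = c D * ?v D $ i"
        using D(2) by (simp add: c_def sign_vector_def mult_ac)
      also have "\<dots> = (\<Sum>C\<in>?B. c C *s ?v C) $ i"
        by (rule sum_disjoint_supports_nth[where v = ?v, OF fin support disjoint True D(2), symmetric])
      finally show ?thesis .
    next
      case False
      then have "x $ i = 0"
        using sign_consistent_vanishes_off_balanced[OF wa s x D(1) _ D(2)]
        by (simp add: balanced_components_def D(1))
      moreover have "i \<notin> C" if C: "C \<in> ?B" for C
      proof -
        have "C = D \<or> disjnt C D"
          using pairwise_disjnt_components[OF wa] D(1) B C by (metis pairwiseD subsetD)
        then show ?thesis
          using False C D(2) by (auto simp: disjnt_iff)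
      qed
      ultimately show ?thesis
        by (simp add: support)
    qed
  qed
  then have "x = (\<Sum>C\<in>?B. c C *s ?v C)"
    by (simp add: vec_eq_iff)
  also have "\<dots> \<in> vec.span (?v ` ?B)"
    by (intro vec.span_sum vec.span_scale vec.span_base) auto
  finally show "x \<in> vec.span (?v ` ?B)" .
qed

section \<open>Geometric multiplicities\<close>

lemma dim_sign_consistent:
  fixes A :: "real^'n^'n"
  assumes wa: "weighted_adjacency A" and s: "s\<^sup>2 = 1"
  shows "vec.dim (sign_consistent A s) = card (balanced_components A s)"
proof -
  let ?B = "balanced_components A s"
  have "\<forall>C\<in>?B. \<exists>\<sigma>. (\<forall>i\<in>C. \<sigma> i = 1 \<or> \<sigma> i = -1) \<and> (\<forall>a\<in>C. \<forall>b\<in>C. adj A a b \<longrightarrow> \<sigma> a = s * \<sigma> b)"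
    unfolding balanced_components_def sign_balanced_def by blast
  then obtain \<sigma> where
    "\<forall>C\<in>?B. (\<forall>i\<in>C. \<sigma> C i = 1 \<or> \<sigma> C i = -1) \<and> (\<forall>a\<in>C. \<forall>b\<in>C. adj A a b \<longrightarrow> \<sigma> C a = s * \<sigma> C b)"
    by (rule bchoice[THEN exE])
  then have pm: "\<And>C i. C \<in> ?B \<Longrightarrow> i \<in> C \<Longrightarrow> \<sigma> C i = 1 \<or> \<sigma> C i = -1"
    and balanced: "\<And>C. C \<in> ?B \<Longrightarrow> \<forall>a\<in>C. \<forall>b\<in>C. adj A a b \<longrightarrow> \<sigma> C a = s * \<sigma> C b"
    by auto
  let ?v = "\<lambda>C. sign_vector C (\<sigma> C)"
  have support: "?v C $ k = 0" if "k \<notin> C" for C k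
    using that by (simp add: sign_vector_def)
  have nonzero: "\<exists>k\<in>C. ?v C $ k \<noteq> 0" if C: "C \<in> ?B" for C
  proof -
    obtain k where k: "k \<in> C"
      using component_nonempty[OF wa] balanced_components_subset C by blast
    then have "?v C $ k \<noteq> 0"
      using pm[OF C k] by (auto simp: sign_vector_def)
    with k show ?thesis ..
  qed
  note disjoint = pairwise_disjnt_balanced_components[OF wa, of s]
  have "?v ` ?B \<subseteq> sign_consistent A s"
    using sign_vector_in_sign_consistent[OF wa] balanced balanced_components_subset by blast
  moreover have "vec.independent (?v ` ?B)"
    by (rule independent_disjoint_supports[where v = ?v, OF finite_balanced_components support
          disjoint nonzero])
  moreover have "card (?v ` ?B) = card ?B"
    by (rule card_image, rule inj_on_disjoint_supports[where v = ?v, OF support disjoint nonzero])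
  ultimately show ?thesis
    using vec.dim_unique sign_consistent_subset_span[OF wa s pm balanced] by blast
qed

lemma kernel_degree_minus_identity:
  "{x. cmat (degree_matrix A - mat 1) *v x = 0} = {x::complex^'n. \<forall>i. i \<notin> {i. wdeg A i = 1} \<longrightarrow> x$i = 0}"
proof -
  have "(cmat (degree_matrix A - mat 1) *v x) $ i = of_real (wdeg A i - 1) * x$i" for x :: "complex^'n" and i
  proof -
    have "(cmat (degree_matrix A - mat 1) *v x) $ i
        = (\<Sum>j\<in>UNIV. if i = j then of_real (wdeg A i - 1) * x$j else 0)"
      unfolding cmat_def matrix_vector_mult_def degree_matrix_def mat_def vec_lambda_beta
      by (intro sum.cong) auto
    then show ?thesis
      by simp
  qed
  then show ?thesis
    by (auto simp: vec_eq_iff)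
qed

lemma geom_mult_LDF_1:
  fixes A :: "real^'n^'n"
  assumes wa: "weighted_adjacency A"
  shows "mp_geom_mult (LDF A) 2 1 = card (components A)"
proof -
  have "mp_geom_mult (LDF A) 2 1 = vec.dim (sign_consistent A 1)"
    using mpeval_LDF_sign[of 1 A] kernel_signed_laplacian[OF wa, of 1]
    by (simp add: mp_geom_mult_def)
  also have "\<dots> = card (balanced_components A 1)"
    using dim_sign_consistent[OF wa, of 1] by simp
  also have "balanced_components A 1 = components A"
    by (simp add: balanced_components_def sign_balanced_1)
  finally show ?thesis .
qed

lemma geom_mult_LDF_neg1:
  fixes A :: "real^'n^'n"
  assumes wa: "weighted_adjacency A"
  shows "mp_geom_mult (LDF A) 2 (-1) = card (bipartite_components A)"
proof -
  have "mp_geom_mult (LDF A) 2 (-1) = vec.dim (sign_consistent A (-1))"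
    using mpeval_LDF_sign[of "-1" A] kernel_signed_laplacian[OF wa, of "-1"]
    by (simp add: mp_geom_mult_def)
  also have "\<dots> = card (balanced_components A (-1))"
    using dim_sign_consistent[OF wa, of "-1"] by simp
  also have "balanced_components A (-1) = bipartite_components A"
    by (simp add: balanced_components_def bipartite_components_def sign_balanced_neg1_iff_bipartite)
  finally show ?thesis .
qed

lemma geom_mult_inf_LDF: "mp_geom_mult_inf (LDF A) 2 = card {i. wdeg A i = 1}"
  unfolding mp_geom_mult_inf_def mp_geom_mult_def mpeval_reversal_LDF_0
    kernel_degree_minus_identity
  by (rule dim_substandard_cart)

theorem proposition3:
  fixes A :: "real^'n^'n"
  assumes "weighted_adjacency A"
  shows "(mp_regular (LDF A) 2 \<and> \<not> mp_eigenvalue (LDF A) 2 0)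
       \<and> (mp_eigenvalue (LDF A) 2 1 \<and> mp_geom_mult (LDF A) 2 1 = card (components A))
       \<and> (mp_geom_mult_inf (LDF A) 2 = card {i. wdeg A i = 1}
          \<and> (mp_inf_eigenvalue (LDF A) 2 \<longleftrightarrow> (\<exists>i. wdeg A i = 1)))
       \<and> ((mp_eigenvalue (LDF A) 2 (-1) \<longleftrightarrow> bipartite_components A \<noteq> {})
          \<and> (bipartite_components A \<noteq> {} \<longrightarrow>
               mp_geom_mult (LDF A) 2 (-1) = card (bipartite_components A)))"
proof -
  have "mp_regular (LDF A) 2" and "\<not> mp_eigenvalue (LDF A) 2 0"
    unfolding mp_regular_def mp_eigenvalue_def by (auto simp: mpeval_LDF_0 intro: exI[of _ 0])
  moreover have "components A \<noteq> {}"
    using component_exists by blast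
  moreover have "finite (bipartite_components A)"
    using finite_subset[OF _ finite_components] by (auto simp: bipartite_components_def)
  ultimately show ?thesis
    using geom_mult_LDF_1[OF assms] geom_mult_LDF_neg1[OF assms] geom_mult_inf_LDF[of A]
      finite_components[of A]
    by (simp add: mp_eigenvalue_iff_geom_mult_nonzero mp_inf_eigenvalue_iff_geom_mult_inf_nonzero)
qed

end
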